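(* Let $X$ be a convex subset of $\mathbb{R}^n$ and $f=(f_1,\ldots,f_m):X\to\mathbb{R}^m$ a convex mapping. Then the following are equivalent: $(\alpha)$ $\mathrm{WE}(f,X)=\mathrm{E}(f,X)$; $(\beta)$ $\displaystyle\bigcup_{\emptyset\neq I\subseteq M}\mathrm{E}(f_I,X)\subseteq\mathrm{E}(f,X)$, where $M=\{1,\ldots,m\}$.
   Context: A mapping $f=(f_1,\ldots,f_m)$ on a convex set is convex if each $f_i$ is a convex function. Let $M=\{1,\ldots,m\}$. For a nonempty $I\subseteq M$ and $y,y'\in\mathbb{R}^m$: $y\lneq_I y'$ means $y_i\leq y'_i$ for all $i\in I$ and $y_j<y'_j$ for some $j\in I$; $y<_I y'$ means $y_i<y'_i$ for all $i\in I$. For $Y\subseteq\mathbb{R}^m$, $\mathrm{M}_I Y$ (resp. $\mathrm{WM}_I Y$) is the set of all $y'\in Y$ for which there is no $y\in Y$ with $y\lneq_I y'$ (resp. $y<_I y'$). For $I=\{i_1<\cdots<i_k\}$, $f_I=(f_{i_1},\ldots,f_{i_k})$, $\mathrm{E}(f_I,X)=f^{-1}(\mathrm{M}_I f(X))$, $\mathrm{WE}(f_I,X)=f^{-1}(\mathrm{WM}_I f(X))$; $\mathrm{E}(f,X)=\mathrm{E}(f_M,X)$, $\mathrm{WE}(f,X)=\mathrm{WE}(f_M,X)$. *)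

theory Defs
  imports "HOL-Analysis.Analysis"
begin

text \<open>Objective space R^m is modelled as real^'m for a finite index type 'm,
  so M = {1..m} corresponds to UNIV :: 'm set.\<close>

definition lesseq_neq_on :: "'m set \<Rightarrow> real^'m \<Rightarrow> real^'m \<Rightarrow> bool" where
  "lesseq_neq_on I y y' \<longleftrightarrow> (\<forall>i\<in>I. y$i \<le> y'$i) \<and> (\<exists>j\<in>I. y$j < y'$j)"

definition less_on :: "'m set \<Rightarrow> real^'m \<Rightarrow> real^'m \<Rightarrow> bool" where
  "less_on I y y' \<longleftrightarrow> (\<forall>i\<in>I. y$i < y'$i)"

definition Min_on :: "'m set \<Rightarrow> (real^'m) set \<Rightarrow> (real^'m) set" where
  "Min_on I Y = {y'\<in>Y. \<not> (\<exists>y\<in>Y. lesseq_neq_on I y y')}"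

definition WMin_on :: "'m set \<Rightarrow> (real^'m) set \<Rightarrow> (real^'m) set" where
  "WMin_on I Y = {y'\<in>Y. \<not> (\<exists>y\<in>Y. less_on I y y')}"

definition Eff :: "'m set \<Rightarrow> ('a \<Rightarrow> real^'m) \<Rightarrow> 'a set \<Rightarrow> 'a set" where
  "Eff I f X = {x\<in>X. f x \<in> Min_on I (f ` X)}"

definition WEff :: "'m set \<Rightarrow> ('a \<Rightarrow> real^'m) \<Rightarrow> 'a set \<Rightarrow> 'a set" where
  "WEff I f X = {x\<in>X. f x \<in> WMin_on I (f ` X)}"

end

theory Submission
  imports Defs
begin

text \<open>Every efficient point for a nonempty subfamily of the objectives is weakly efficient for
  all of them, which gives one direction without convexity. Conversely, let x be weakly efficient
  for I but not efficient for I: some y is no worse on I and strictly better at some j \<in> I.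
  If x were not even weakly efficient for I - {j}, there would be a z strictly better on
  I - {j}, and a point close to y on the segment towards z would be strictly better than x on
  all of I by convexity. So x is weakly efficient for the smaller family I - {j} (which is
  nonempty), and induction on |I| produces a nonempty J with x efficient for J.\<close>

lemma Eff_subset_WEff_UNIV:
  assumes "I \<noteq> {}"
  shows "Eff I f X \<subseteq> WEff UNIV f X"
proof
  fix x assume "x \<in> Eff I f X"
  then have xX: "x \<in> X" and no_better: "\<And>y. y \<in> X \<Longrightarrow> \<not> lesseq_neq_on I (f y) (f x)"
    unfolding Eff_def Min_on_def by auto
  have "\<not> less_on UNIV (f y) (f x)" if "y \<in> X" for y
  proof
    assume "less_on UNIV (f y) (f x)"
    with assms have "lesseq_neq_on I (f y) (f x)"
      unfolding less_on_def lesseq_neq_on_def by (auto intro: less_imp_le)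
    with no_better that show False by blast
  qed
  with xX show "x \<in> WEff UNIV f X" unfolding WEff_def WMin_on_def by auto
qed

lemma convex_segment_strictly_improves:
  fixes X :: "'a::real_vector set" and f :: "'a \<Rightarrow> real^'m"
  assumes "convex X" and "\<And>i. convex_on X (\<lambda>x. f x $ i)"
    and yX: "y \<in> X" and zX: "z \<in> X"
    and y_le: "\<And>i. i \<in> I \<Longrightarrow> f y $ i \<le> f x $ i" and y_less: "f y $ j < f x $ j"
    and z_less: "\<And>i. i \<in> I - {j} \<Longrightarrow> f z $ i < f x $ i"
  shows "\<exists>w\<in>X. less_on I (f w) (f x)"
proof -
  define d where "d = f x $ j - f y $ j"
  define c where "c = f z $ j - f y $ j"
  \<comment> \<open>t is small enough that moving towards z loses less than the margin d in coordinate j.\<close>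
  define t where "t = d / (2 * (\<bar>c\<bar> + d))"
  have d_pos: "d > 0" using y_less by (simp add: d_def)
  have t_pos: "t > 0" using d_pos by (simp add: t_def)
  have t_le: "t \<le> 1/2" using d_pos by (simp add: t_def divide_simps)
  have "t * c \<le> t * \<bar>c\<bar>" using t_pos by (simp add: mult_left_mono)
  also have "\<dots> \<le> d / 2" using d_pos by (simp add: t_def divide_simps)
  finally have tc_less: "t * c < d" using d_pos by simp
  define w where "w = (1 - t) *\<^sub>R y + t *\<^sub>R z"
  have wX: "w \<in> X"
    using convexD[OF assms(1) yX zX, of "1 - t" t] t_pos t_le by (simp add: w_def)
  have f_w: "f w $ i \<le> (1 - t) * f y $ i + t * f z $ i" for i
    using convex_onD[OF assms(2), of t y z] t_pos t_le yX zX by (simp add: w_def)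
  have "f w $ i < f x $ i" if iI: "i \<in> I" for i
  proof (cases "i = j")
    case True
    have "(1 - t) * f y $ j + t * f z $ j = f y $ j + t * c"
      by (simp add: c_def algebra_simps)
    with f_w[of j] tc_less True show ?thesis by (simp add: d_def)
  next
    case False
    with iI have "f z $ i < f x $ i" and "f y $ i \<le> f x $ i" using z_less y_le by auto
    then have "(1 - t) * f y $ i \<le> (1 - t) * f x $ i" and "t * f z $ i < t * f x $ i"
      using t_pos t_le by (simp_all add: mult_left_mono)
    with f_w[of i] show ?thesis by (simp add: algebra_simps)
  qed
  with wX show ?thesis unfolding less_on_def by blast
qed

lemma WEff_imp_Eff_subfamily:
  fixes X :: "'a::real_vector set" and f :: "'a \<Rightarrow> real^'m"
  assumes "convex X" and "\<And>i. convex_on X (\<lambda>x. f x $ i)"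
    and "I \<noteq> {}" and "x \<in> WEff I f X"
  shows "\<exists>J. J \<noteq> {} \<and> x \<in> Eff J f X"
  using assms(3,4)
proof (induction "card I" arbitrary: I rule: less_induct)
  case less
  have xX: "x \<in> X" and not_dominated: "\<And>w. w \<in> X \<Longrightarrow> \<not> less_on I (f w) (f x)"
    using less.prems(2) unfolding WEff_def WMin_on_def by auto
  show ?case
  proof (cases "x \<in> Eff I f X")
    case True
    with less.prems(1) show ?thesis by blast
  next
    case False
    then obtain y j where yX: "y \<in> X" and y_le: "\<And>i. i \<in> I \<Longrightarrow> f y $ i \<le> f x $ i"
      and jI: "j \<in> I" and y_less: "f y $ j < f x $ j"
      using xX unfolding Eff_def Min_on_def lesseq_neq_on_def by auto
    have "x \<in> WEff (I - {j}) f X"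
    proof (rule ccontr)
      assume "x \<notin> WEff (I - {j}) f X"
      then obtain z where "z \<in> X" and "\<And>i. i \<in> I - {j} \<Longrightarrow> f z $ i < f x $ i"
        using xX unfolding WEff_def WMin_on_def less_on_def by auto
      with convex_segment_strictly_improves[OF assms(1,2) yX _ y_le y_less] not_dominated
      show False by blast
    qed
    moreover have "I - {j} \<noteq> {}"
    proof
      assume "I - {j} = {}"
      with jI have "less_on I (f y) (f x)" using y_less unfolding less_on_def by auto
      with not_dominated yX show False by blast
    qed
    moreover have "card (I - {j}) < card I"
      using jI by (rule card_Diff1_less[OF finite])
    ultimately show ?thesis using less.hyps by blast
  qed
qed

theorem corollary6p2:
  fixes X :: "(real^'n) set" and f :: "real^'n \<Rightarrow> real^'m"
  assumes "convex X"
    and "\<And>i. convex_on X (\<lambda>x. f x $ i)"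
  shows "WEff UNIV f X = Eff UNIV f X \<longleftrightarrow>
         (\<Union>I\<in>{I. I \<noteq> {}}. Eff I f X) \<subseteq> Eff UNIV f X"
proof
  assume weak_eq: "WEff UNIV f X = Eff UNIV f X"
  show "(\<Union>I\<in>{I. I \<noteq> {}}. Eff I f X) \<subseteq> Eff UNIV f X"
  proof (rule UN_least)
    fix I :: "'m set" assume "I \<in> {I. I \<noteq> {}}"
    then show "Eff I f X \<subseteq> Eff UNIV f X"
      using Eff_subset_WEff_UNIV[of I f X] weak_eq by simp
  qed
next
  assume subfamilies: "(\<Union>I\<in>{I. I \<noteq> {}}. Eff I f X) \<subseteq> Eff UNIV f X"
  have "WEff UNIV f X \<subseteq> Eff UNIV f X"
    using WEff_imp_Eff_subfamily[OF assms, of UNIV] subfamilies by blast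
  moreover have "Eff UNIV f X \<subseteq> WEff UNIV f X"
    by (rule Eff_subset_WEff_UNIV) simp
  ultimately show "WEff UNIV f X = Eff UNIV f X" by (rule subset_antisym)
qed

end
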